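(* Fix $c > 0$. For a set $L \subset [k+\ell-2]$ with $|L| = \ell - 1$ (where $\ell,k \in \mathbb{N}$), define $$m(L) = \max\big\{ 1 \le m \le k+\ell-2 \,:\, |L \cap [m]| \le c \log m \text{ or } [m] \subset L \big\},$$ $$\ell'(L) = |L \cap [m(L)]| + 1, \qquad k'(L) = m(L) - \ell'(L) + 2.$$ Then for every $\ell, k \in \mathbb{N}$, $$R(\ell,k) \le \sum_{L \in \binom{[k+\ell-2]}{\ell-1}} \binom{k'(L)+\ell'(L)-2}{\ell'(L)-1}^{-1} R\big(\ell'(L), k'(L)\big).$$
   Context: $[m] = \{1,\dots,m\}$, and $\binom{[N]}{j}$ denotes the family of $j$-element subsets of $[N]$. $\log$ is the natural logarithm. For $\ell,k \in \mathbb{N}$, the Ramsey number $R(\ell,k)$ is the smallest $n \in \mathbb{N}$ such that every red-blue colouring of the edges of the complete graph $K_n$ contains either a red copy of $K_\ell$ or a blue copy of $K_k$; by convention $R(1,k) = R(\ell,1) = 1$. *)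

theory Defs
  imports Complex_Main
begin

text \<open>A red-blue colouring of the edges of K_n on vertex set {..<n} is a predicate
  on 2-element sets (True = red, False = blue). The property "every colouring
  contains a red K_l or a blue K_k".\<close>
definition ramsey_prop :: "nat \<Rightarrow> nat \<Rightarrow> nat \<Rightarrow> bool" where
  "ramsey_prop l k n \<longleftrightarrow>
     (\<forall>col :: nat set \<Rightarrow> bool.
        (\<exists>S. S \<subseteq> {..<n} \<and> card S = l \<and> (\<forall>e. e \<subseteq> S \<and> card e = 2 \<longrightarrow> col e)) \<or>
        (\<exists>S. S \<subseteq> {..<n} \<and> card S = k \<and> (\<forall>e. e \<subseteq> S \<and> card e = 2 \<longrightarrow> \<not> col e)))"

definition ramsey_num :: "nat \<Rightarrow> nat \<Rightarrow> nat" where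
  "ramsey_num l k = (LEAST n. ramsey_prop l k n)"

text \<open>m(L) for L \<subseteq> [k+l-2]; N = k + l - 2. The set of candidates always contains 1
  when N \<ge> 1; the inserted 0 only matters in the degenerate case N = 0.\<close>
definition mL :: "real \<Rightarrow> nat \<Rightarrow> nat set \<Rightarrow> nat" where
  "mL c N L = Max (insert 0 {m. 1 \<le> m \<and> m \<le> N \<and>
       (real (card (L \<inter> {1..m})) \<le> c * ln (real m) \<or> {1..m} \<subseteq> L)})"

definition lL :: "real \<Rightarrow> nat \<Rightarrow> nat set \<Rightarrow> nat" where
  "lL c N L = card (L \<inter> {1..mL c N L}) + 1"

definition kL :: "real \<Rightarrow> nat \<Rightarrow> nat set \<Rightarrow> nat" where
  "kL c N L = mL c N L + 2 - lL c N L"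

end

theory Submission
  imports Defs
begin

(* Write T_N(L) for the summand, so that the theorem reads R(a+1, b+1) <= sum of T_(a+b)(L)
   over the a-subsets L of [a+b]; this is proved by induction on a + b.
   If a <= c log(a+b) or b = 0, every such L satisfies the stopping rule at m = a+b, so
   m(L) = a+b, each summand is R(a+1, b+1) / binom(a+b, a), and the sum is exactly R(a+1, b+1).
   Otherwise no L stops at a+b, hence T_(a+b)(L) = T_(a+b-1)(L - {a+b}); splitting the sum
   according to whether a+b is in L yields the sums for (a, b-1) and (a-1, b), and the
   Erdos-Szekeres recurrence R(a+1, b+1) <= R(a, b+1) + R(a+1, b) closes the induction. *)

definition monochromatic :: "('a set \<Rightarrow> bool) \<Rightarrow> bool \<Rightarrow> 'a set \<Rightarrow> bool" where
  "monochromatic col b S \<longleftrightarrow> (\<forall>e. e \<subseteq> S \<and> card e = 2 \<longrightarrow> col e = b)"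

definition has_mono_clique :: "('a set \<Rightarrow> bool) \<Rightarrow> bool \<Rightarrow> nat \<Rightarrow> 'a set \<Rightarrow> bool" where
  "has_mono_clique col b s V \<longleftrightarrow> (\<exists>S\<subseteq>V. card S = s \<and> monochromatic col b S)"

definition ramsey_on :: "nat \<Rightarrow> nat \<Rightarrow> 'a set \<Rightarrow> bool" where
  "ramsey_on l k V \<longleftrightarrow>
     (\<forall>col. has_mono_clique col True l V \<or> has_mono_clique col False k V)"

lemma ramsey_prop_iff_ramsey_on: "ramsey_prop l k n \<longleftrightarrow> ramsey_on l k {..<n}"
  unfolding ramsey_prop_def ramsey_on_def has_mono_clique_def monochromatic_def by simp

lemma has_mono_clique_0 [simp]: "has_mono_clique col b 0 V"
  unfolding has_mono_clique_def monochromatic_def by (auto intro: exI[of _ "{}"])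

lemma has_mono_clique_empty: "has_mono_clique col b s {} \<longleftrightarrow> s = 0"
  unfolding has_mono_clique_def monochromatic_def by auto

lemma has_mono_clique_mono:
  "has_mono_clique col b s V \<Longrightarrow> V \<subseteq> W \<Longrightarrow> has_mono_clique col b s W"
  unfolding has_mono_clique_def by blast

lemma has_mono_clique_image:
  assumes "inj_on f V" "f ` V \<subseteq> W" "has_mono_clique (\<lambda>e. col (f ` e)) b s V"
  shows "has_mono_clique col b s W"
proof -
  obtain S where S: "S \<subseteq> V" "card S = s" "monochromatic (\<lambda>e. col (f ` e)) b S"
    using assms(3) unfolding has_mono_clique_def by blast
  have inj: "inj_on f S"
    using assms(1) S(1) by (rule inj_on_subset)
  have "monochromatic col b (f ` S)"
    unfolding monochromatic_def
  proof (intro allI impI)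
    fix e assume e: "e \<subseteq> f ` S \<and> card e = 2"
    then obtain e' where "e' \<subseteq> S" "e = f ` e'"
      by (auto simp: subset_image_iff)
    moreover have "card e' = card e"
      using calculation inj by (simp add: card_image inj_on_subset)
    ultimately show "col e = b"
      using S(3) e unfolding monochromatic_def by auto
  qed
  moreover have "f ` S \<subseteq> W" "card (f ` S) = s"
    using S assms(2) inj by (auto simp: card_image)
  ultimately show ?thesis
    unfolding has_mono_clique_def by blast
qed

lemma monochromatic_insert:
  assumes "monochromatic col b S" "\<forall>u\<in>S. col {u, v} = b"
  shows "monochromatic col b (insert v S)"
  unfolding monochromatic_def
proof (intro allI impI)
  fix e assume e: "e \<subseteq> insert v S \<and> card e = 2"
  then obtain x y where xy: "e = {x, y}" "x \<noteq> y"
    by (auto simp: card_2_iff)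
  show "col e = b"
  proof (cases "v \<in> e")
    case True
    then show ?thesis
      using assms(2) e xy by (auto simp: insert_commute)
  next
    case False
    then show ?thesis
      using assms(1) e unfolding monochromatic_def by blast
  qed
qed

lemma has_mono_clique_cone:
  assumes "has_mono_clique col b s N" "finite N" "N \<subseteq> V" "v \<in> V" "v \<notin> N"
    and "\<forall>u\<in>N. col {u, v} = b"
  shows "has_mono_clique col b (Suc s) V"
proof -
  obtain S where S: "S \<subseteq> N" "card S = s" "monochromatic col b S"
    using assms(1) unfolding has_mono_clique_def by blast
  have "finite S" "v \<notin> S"
    using S(1) assms(2,5) finite_subset by auto
  then have "insert v S \<subseteq> V" "card (insert v S) = Suc s"
    using S assms(3,4) by auto
  moreover have "monochromatic col b (insert v S)"
    using S assms(6) by (blast intro: monochromatic_insert)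
  ultimately show ?thesis
    unfolding has_mono_clique_def by blast
qed

lemma ramsey_on_embed:
  assumes "ramsey_on l k V" "inj_on f V" "f ` V \<subseteq> W"
  shows "ramsey_on l k W"
  unfolding ramsey_on_def
proof
  fix col :: "'b set \<Rightarrow> bool"
  from assms(1) have "has_mono_clique (\<lambda>e. col (f ` e)) True l V \<or>
      has_mono_clique (\<lambda>e. col (f ` e)) False k V"
    unfolding ramsey_on_def by blast
  then show "has_mono_clique col True l W \<or> has_mono_clique col False k W"
    using has_mono_clique_image[OF assms(2,3)] by blast
qed

lemma ramsey_prop_imp_ramsey_on:
  assumes "ramsey_prop l k n" "finite W" "n \<le> card W"
  shows "ramsey_on l k W"
proof -
  obtain f where "f ` {..<n} \<subseteq> W" "inj_on f {..<n}"
    using card_le_inj[of "{..<n}" W] assms(2,3) by auto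
  then show ?thesis
    using assms(1) ramsey_on_embed by (auto simp: ramsey_prop_iff_ramsey_on)
qed

lemma ramsey_prop_mono: "ramsey_prop l k n \<Longrightarrow> n \<le> m \<Longrightarrow> ramsey_prop l k m"
  by (simp add: ramsey_prop_imp_ramsey_on ramsey_prop_iff_ramsey_on[of l k m])

lemma ramsey_prop_Suc_Suc:
  assumes p: "ramsey_prop a (Suc b) p" and q: "ramsey_prop (Suc a) b q" and "0 < p + q"
  shows "ramsey_prop (Suc a) (Suc b) (p + q)"
proof -
  obtain n where n: "p + q = Suc n"
    using \<open>0 < p + q\<close> gr0_implies_Suc by blast
  show ?thesis
    unfolding ramsey_prop_iff_ramsey_on n ramsey_on_def
  proof
    fix col :: "nat set \<Rightarrow> bool"
    define Red where "Red = {u\<in>{..<n}. col {u, n} = True}"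
    define Blue where "Blue = {u\<in>{..<n}. col {u, n} = False}"
    have "Red \<union> Blue = {..<n}" "Red \<inter> Blue = {}" "finite Red" "finite Blue"
      by (auto simp: Red_def Blue_def)
    then have "card Red + card Blue = n"
      using card_Un_disjoint[of Red Blue] by simp
    then consider "p \<le> card Red" | "q \<le> card Blue"
      using n by linarith
    then show "has_mono_clique col True (Suc a) {..<Suc n} \<or>
        has_mono_clique col False (Suc b) {..<Suc n}"
    proof cases
      case 1
      then have "ramsey_on a (Suc b) Red"
        using ramsey_prop_imp_ramsey_on[OF p \<open>finite Red\<close>] by simp
      then have "has_mono_clique col True a Red \<or> has_mono_clique col False (Suc b) Red"
        unfolding ramsey_on_def by blast
      then show ?thesis
      proof
        assume "has_mono_clique col True a Red"
        then have "has_mono_clique col True (Suc a) {..<Suc n}"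
          by (rule has_mono_clique_cone[where v = n]) (auto simp: Red_def)
        then show ?thesis ..
      qed (auto simp: Red_def intro: has_mono_clique_mono)
    next
      case 2
      then have "ramsey_on (Suc a) b Blue"
        using ramsey_prop_imp_ramsey_on[OF q \<open>finite Blue\<close>] by simp
      then have "has_mono_clique col True (Suc a) Blue \<or> has_mono_clique col False b Blue"
        unfolding ramsey_on_def by blast
      then show ?thesis
      proof
        assume "has_mono_clique col False b Blue"
        then have "has_mono_clique col False (Suc b) {..<Suc n}"
          by (rule has_mono_clique_cone[where v = n]) (auto simp: Blue_def)
        then show ?thesis ..
      qed (auto simp: Blue_def intro: has_mono_clique_mono)
    qed
  qed
qed

lemma ramsey_prop_0_left: "ramsey_prop 0 k n"
  by (simp add: ramsey_prop_iff_ramsey_on ramsey_on_def)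

lemma ramsey_prop_0_right: "ramsey_prop l 0 n"
  by (simp add: ramsey_prop_iff_ramsey_on ramsey_on_def)

lemma ramsey_prop_exists: "\<exists>n. ramsey_prop l k n"
proof (induction l arbitrary: k)
  case 0
  show ?case
    using ramsey_prop_0_left by blast
next
  case (Suc l)
  note IH_l = Suc.IH
  show ?case
  proof (induction k)
    case 0
    show ?case
      using ramsey_prop_0_right by blast
  next
    case (Suc k)
    obtain p q where "ramsey_prop l (Suc k) p" "ramsey_prop (Suc l) k q"
      using IH_l Suc.IH by blast
    \<comment> \<open>enlarging p guarantees the nonempty vertex set the recurrence step needs\<close>
    then have "ramsey_prop l (Suc k) (Suc p)"
      using ramsey_prop_mono le_SucI by blast
    then show ?case
      using ramsey_prop_Suc_Suc \<open>ramsey_prop (Suc l) k q\<close> by blast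
  qed
qed

lemma ramsey_prop_ramsey_num: "ramsey_prop l k (ramsey_num l k)"
  unfolding ramsey_num_def by (rule LeastI_ex) (rule ramsey_prop_exists)

lemma ramsey_num_pos: "0 < ramsey_num (Suc l) (Suc k)"
proof (rule ccontr)
  assume "\<not> 0 < ramsey_num (Suc l) (Suc k)"
  then have "ramsey_on (Suc l) (Suc k) ({} :: nat set)"
    using ramsey_prop_ramsey_num[of "Suc l" "Suc k"] by (simp add: ramsey_prop_iff_ramsey_on)
  then show False
    by (simp add: ramsey_on_def has_mono_clique_empty)
qed

lemma ramsey_num_Suc_Suc:
  assumes "0 < l \<or> 0 < k"
  shows "ramsey_num (Suc l) (Suc k) \<le> ramsey_num l (Suc k) + ramsey_num (Suc l) k"
proof -
  have "0 < ramsey_num l (Suc k) + ramsey_num (Suc l) k"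
    using assms ramsey_num_pos[of "l - 1" k] ramsey_num_pos[of l "k - 1"] by auto
  then have "ramsey_prop (Suc l) (Suc k) (ramsey_num l (Suc k) + ramsey_num (Suc l) k)"
    by (intro ramsey_prop_Suc_Suc ramsey_prop_ramsey_num)
  then show ?thesis
    unfolding ramsey_num_def by (rule Least_le)
qed

definition stops_at :: "real \<Rightarrow> nat set \<Rightarrow> nat \<Rightarrow> bool" where
  "stops_at c L m \<longleftrightarrow> real (card (L \<inter> {1..m})) \<le> c * ln (real m) \<or> {1..m} \<subseteq> L"

definition ramsey_term :: "real \<Rightarrow> nat \<Rightarrow> nat set \<Rightarrow> real" where
  "ramsey_term c N L = real (ramsey_num (lL c N L) (kL c N L)) /
     real ((kL c N L + lL c N L - 2) choose (lL c N L - 1))"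

lemma mL_eq_Max: "mL c N L = Max (insert 0 {m. 1 \<le> m \<and> m \<le> N \<and> stops_at c L m})"
  unfolding mL_def stops_at_def ..

lemma finite_stops_at_below: "finite {m. 1 \<le> m \<and> m \<le> N \<and> stops_at c L m}"
  by (rule finite_subset[of _ "{..N}"]) auto

lemma mL_le: "mL c N L \<le> N"
  unfolding mL_eq_Max using finite_stops_at_below by (subst Max_le_iff) auto

lemma mL_eq_top:
  assumes "stops_at c L N"
  shows "mL c N L = N"
proof (cases "N = 0")
  case False
  then have "N \<le> mL c N L"
    unfolding mL_eq_Max using assms finite_stops_at_below by (intro Max_ge) auto
  then show ?thesis
    using mL_le[of c N L] by simp
qed (use mL_le[of c N L] in simp)

lemma mL_Suc:
  assumes "\<not> stops_at c L (Suc n)"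
  shows "mL c (Suc n) L = mL c n (L - {Suc n})"
proof -
  have "stops_at c L m \<longleftrightarrow> stops_at c (L - {Suc n}) m" if "m \<le> n" for m
  proof -
    have "L \<inter> {1..m} = (L - {Suc n}) \<inter> {1..m}" "{1..m} \<subseteq> L \<longleftrightarrow> {1..m} \<subseteq> L - {Suc n}"
      using that by auto
    then show ?thesis
      unfolding stops_at_def by simp
  qed
  then have "{m. 1 \<le> m \<and> m \<le> Suc n \<and> stops_at c L m} =
      {m. 1 \<le> m \<and> m \<le> n \<and> stops_at c (L - {Suc n}) m}"
    using assms by (auto simp: le_Suc_eq)
  then show ?thesis
    unfolding mL_eq_Max by simp
qed

lemma ramsey_term_Suc:
  assumes "\<not> stops_at c L (Suc n)"
  shows "ramsey_term c (Suc n) L = ramsey_term c n (L - {Suc n})"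
proof -
  have m: "mL c (Suc n) L = mL c n (L - {Suc n})"
    using assms by (rule mL_Suc)
  then have "L \<inter> {1..mL c (Suc n) L} = (L - {Suc n}) \<inter> {1..mL c n (L - {Suc n})}"
    using mL_le[of c n "L - {Suc n}"] by auto
  then have "lL c (Suc n) L = lL c n (L - {Suc n})"
    unfolding lL_def m by simp
  then show ?thesis
    unfolding ramsey_term_def kL_def m by simp
qed

lemma ramsey_term_top:
  assumes "L \<subseteq> {1..N}" "stops_at c L N"
  shows "ramsey_term c N L =
    real (ramsey_num (Suc (card L)) (Suc (N - card L))) / real (N choose card L)"
proof -
  have "card L \<le> N"
    using card_mono[OF _ assms(1)] by simp
  moreover have "lL c N L = Suc (card L)"
    unfolding lL_def mL_eq_top[OF assms(2)] using assms(1) by (simp add: Int_absorb2)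
  ultimately show ?thesis
    unfolding ramsey_term_def kL_def mL_eq_top[OF assms(2)] by (simp add: Suc_diff_le)
qed

lemma stops_at_top_iff:
  assumes "L \<subseteq> {1..N}"
  shows "stops_at c L N \<longleftrightarrow> real (card L) \<le> c * ln (real N) \<or> card L = N"
proof -
  have "{1..N} \<subseteq> L \<longleftrightarrow> card L = N"
    using assms card_subset_eq[OF _ assms] by fastforce
  then show ?thesis
    unfolding stops_at_def using assms by (simp add: Int_absorb2)
qed

lemma sum_subsets_insert:
  assumes "finite A" "x \<notin> A"
  shows "(\<Sum>L | L \<subseteq> insert x A \<and> card L = Suc j. f L) =
    (\<Sum>L | L \<subseteq> A \<and> card L = Suc j. f L) + (\<Sum>K | K \<subseteq> A \<and> card K = j. f (insert x K))"
proof -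
  let ?F = "\<lambda>i. {L. L \<subseteq> A \<and> card L = i}"
  have split: "{L. L \<subseteq> insert x A \<and> card L = Suc j} = ?F (Suc j) \<union> insert x ` ?F j"
  proof (intro set_eqI iffI)
    fix L assume L: "L \<in> {L. L \<subseteq> insert x A \<and> card L = Suc j}"
    show "L \<in> ?F (Suc j) \<union> insert x ` ?F j"
    proof (cases "x \<in> L")
      case True
      then have "L = insert x (L - {x})" "L - {x} \<subseteq> A" "card (L - {x}) = j"
        using L finite_subset[OF _ assms(1)] by auto
      then show ?thesis
        by blast
    qed (use L in auto)
  next
    fix L assume "L \<in> ?F (Suc j) \<union> insert x ` ?F j"
    then show "L \<in> {L. L \<subseteq> insert x A \<and> card L = Suc j}"
      using assms finite_subset[OF _ assms(1)] by (auto simp: card_insert_if)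
  qed
  have "inj_on (insert x) (?F j)"
    using assms(2) by (auto intro!: inj_onI)
  then have "sum f (insert x ` ?F j) = (\<Sum>K \<in> ?F j. f (insert x K))"
    by (simp add: sum.reindex)
  moreover have "sum f (?F (Suc j) \<union> insert x ` ?F j) = sum f (?F (Suc j)) + sum f (insert x ` ?F j)"
    using assms by (intro sum.union_disjoint) auto
  ultimately show ?thesis
    unfolding split by simp
qed

lemma sum_ramsey_term_top:
  assumes "real a \<le> c * ln (real (a + b)) \<or> b = 0"
  shows "(\<Sum>L | L \<subseteq> {1..a + b} \<and> card L = a. ramsey_term c (a + b) L) =
    real (ramsey_num (Suc a) (Suc b))"
proof -
  let ?R = "real (ramsey_num (Suc a) (Suc b)) / real ((a + b) choose a)"
  have "ramsey_term c (a + b) L = ?R" if "L \<subseteq> {1..a + b}" "card L = a" for L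
    using that assms by (simp add: ramsey_term_top stops_at_top_iff)
  then have "(\<Sum>L | L \<subseteq> {1..a + b} \<and> card L = a. ramsey_term c (a + b) L) =
      real ((a + b) choose a) * ?R"
    by (simp add: n_subsets)
  also have "\<dots> = real (ramsey_num (Suc a) (Suc b))"
    by simp
  finally show ?thesis .
qed

lemma sum_ramsey_term_Suc:
  assumes "c * ln (real (Suc n)) < real (Suc a)" "a < n"
  shows "(\<Sum>L | L \<subseteq> {1..Suc n} \<and> card L = Suc a. ramsey_term c (Suc n) L) =
    (\<Sum>L | L \<subseteq> {1..n} \<and> card L = Suc a. ramsey_term c n L) +
    (\<Sum>L | L \<subseteq> {1..n} \<and> card L = a. ramsey_term c n L)"
proof -
  have term_Suc: "ramsey_term c (Suc n) L = ramsey_term c n (L - {Suc n})"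
    if "L \<subseteq> {1..Suc n}" "card L = Suc a" for L
    using that assms by (intro ramsey_term_Suc) (simp add: stops_at_top_iff)
  have "{1..Suc n} = insert (Suc n) {1..n}"
    by auto
  then have "(\<Sum>L | L \<subseteq> {1..Suc n} \<and> card L = Suc a. ramsey_term c (Suc n) L) =
    (\<Sum>L | L \<subseteq> {1..n} \<and> card L = Suc a. ramsey_term c (Suc n) L) +
    (\<Sum>L | L \<subseteq> {1..n} \<and> card L = a. ramsey_term c (Suc n) (insert (Suc n) L))"
    by (simp add: sum_subsets_insert)
  also have "\<dots> = (\<Sum>L | L \<subseteq> {1..n} \<and> card L = Suc a. ramsey_term c n L) +
    (\<Sum>L | L \<subseteq> {1..n} \<and> card L = a. ramsey_term c n L)"
  proof (intro arg_cong2[where f = "(+)"] sum.cong refl)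
    fix L assume L: "L \<in> {L. L \<subseteq> {1..n} \<and> card L = Suc a}"
    then have "L \<subseteq> {1..Suc n}" "L - {Suc n} = L"
      by auto
    then show "ramsey_term c (Suc n) L = ramsey_term c n L"
      using L term_Suc[of L] by simp
  next
    fix L assume L: "L \<in> {L. L \<subseteq> {1..n} \<and> card L = a}"
    then have "finite L" "Suc n \<notin> L"
      using finite_subset by auto
    then have "insert (Suc n) L \<subseteq> {1..Suc n}" "card (insert (Suc n) L) = Suc a"
      "insert (Suc n) L - {Suc n} = L"
      using L by auto
    then show "ramsey_term c (Suc n) (insert (Suc n) L) = ramsey_term c n L"
      using term_Suc by simp
  qed
  finally show ?thesis .
qed

lemma ramsey_num_le_sum_ramsey_term:
  assumes "0 \<le> c"
  shows "real (ramsey_num (Suc a) (Suc b)) \<le>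
    (\<Sum>L | L \<subseteq> {1..a + b} \<and> card L = a. ramsey_term c (a + b) L)"
proof (induction "a + b" arbitrary: a b rule: less_induct)
  case less
  show ?case
  proof (cases "real a \<le> c * ln (real (a + b)) \<or> b = 0")
    case True
    then show ?thesis
      using sum_ramsey_term_top[OF True] by simp
  next
    case False
    have "0 \<le> c * ln (real (a + b))"
      using assms by (cases "a + b = 0") auto
    with False have "a \<noteq> 0" "b \<noteq> 0"
      by auto
    then obtain a' b' where a: "a = Suc a'" and b: "b = Suc b'"
      by (meson not0_implies_Suc)
    have "real (ramsey_num (Suc a) (Suc b)) \<le>
        real (ramsey_num a (Suc b)) + real (ramsey_num (Suc a) b)"
      using ramsey_num_Suc_Suc[of a b] a by linarith
    also have "\<dots> \<le> (\<Sum>L | L \<subseteq> {1..a' + b} \<and> card L = a'. ramsey_term c (a' + b) L) +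
        (\<Sum>L | L \<subseteq> {1..a + b'} \<and> card L = a. ramsey_term c (a + b') L)"
      using less[of a' b] less[of a b'] a b by (intro add_mono) auto
    also have "\<dots> = (\<Sum>L | L \<subseteq> {1..a + b} \<and> card L = a. ramsey_term c (a + b) L)"
      using sum_ramsey_term_Suc[of c "a' + b" a'] False a b by (simp add: add.commute)
    finally show ?thesis .
  qed
qed

theorem lemma6p2:
  fixes c :: real and l k :: nat
  assumes "c > 0" and "l \<ge> 1" and "k \<ge> 1"
  shows "real (ramsey_num l k) \<le>
    (\<Sum>L\<in>{L. L \<subseteq> {1..k + l - 2} \<and> card L = l - 1}.
       real (ramsey_num (lL c (k + l - 2) L) (kL c (k + l - 2) L)) /
       real ((kL c (k + l - 2) L + lL c (k + l - 2) L - 2) choose (lL c (k + l - 2) L - 1)))"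
proof -
  obtain a b where "l = Suc a" "k = Suc b"
    using assms(2,3) by (metis One_nat_def Suc_le_D)
  moreover have "k + l - 2 = a + b"
    using calculation by simp
  ultimately show ?thesis
    using ramsey_num_le_sum_ramsey_term[of c a b] assms(1)
    by (simp add: ramsey_term_def add.commute)
qed

end
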